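(* Let $A\in\mathbb{R}^{m\times n}$ with $m\ge n$ and with nonzero rows $a_1^\top,\dots,a_m^\top$, let $x\in\mathbb{R}^n$ and set $b:=Ax\in\mathbb{R}^m$ (so $x$ solves the consistent system $Ax=b$). Fix $\beta\in[0,1)$, $M\in[0,1]$ and $l\in\{1,\dots,n\}$. Let $\sigma_l$ be the $l$-th largest singular value of $A$ and $v_l$ an associated right singular vector. Given $x_0\in\mathbb{R}^n$ and $y_0=0\in\mathbb{R}^n$, define for $k=0,1,2,\dots$ $$x_{k+1}=x_k+\frac{b_{i_k}-\langle x_k,a_{i_k}\rangle}{\|a_{i_k}\|_2^2}a_{i_k}+My_k,\qquad y_{k+1}=\beta y_k+(1-\beta)(x_{k+1}-x_k),$$ where the indices $i_0,i_1,\dots$ are chosen independently, each equal to $i\in\{1,\dots,m\}$ with probability $\|a_i\|_2^2/\|A\|_F^2$. Set $$r:=1-\frac{\sigma_l^2}{\|A\|_F^2}+M(1-\beta),\qquad \zeta:=M(1-\beta)^2.$$ Then for all $k\ge 0$, $$\mathbb{E}\langle x_{k+1}-x,v_l\rangle=\begin{bmatrix} r\\ \zeta\end{bmatrix}^\top\begin{bmatrix} r&\zeta\\ -1&\beta\end{bmatrix}^k\begin{bmatrix}1\\ \frac{-1}{1-\beta}\end{bmatrix}\langle x_0-x,v_l\rangle .$$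
   Context: $\|\cdot\|_2$ is the Euclidean norm, $\langle\cdot,\cdot\rangle$ the standard inner product, $\|A\|_F$ the Frobenius norm, $b_i$ the $i$-th entry of $b$. The expectation is over the random indices $i_0,\dots,i_k$. The iteration above is called randomized Kaczmarz with geometrically smoothed momentum (KGSM). *)

theory Defs
  imports "HOL-Analysis.Analysis" "HOL-Probability.Probability"
begin

definition frob_norm :: "real^'n^'m \<Rightarrow> real" where
  "frob_norm A = sqrt (\<Sum>i\<in>UNIV. \<Sum>j\<in>UNIV. (A $ i $ j)^2)"

text \<open>Thin singular value decomposition with singular values indexed 1..n in
  non-increasing order: A = sum_j s_j u_j v_j^T, with orthonormal right singular
  vectors V 1..V n (a basis of R^n) and orthonormal left singular vectors U 1..U n.\<close>
definition is_svd :: "real^'n^'m \<Rightarrow> (nat \<Rightarrow> real) \<Rightarrow> (nat \<Rightarrow> real^'m) \<Rightarrow> (nat \<Rightarrow> real^'n) \<Rightarrow> bool" where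
  "is_svd A s U V \<longleftrightarrow>
     (\<forall>j\<in>{1..CARD('n)}. s j \<ge> 0) \<and>
     (\<forall>j\<in>{1..CARD('n)}. \<forall>j'\<in>{1..CARD('n)}. j \<le> j' \<longrightarrow> s j' \<le> s j) \<and>
     (\<forall>j\<in>{1..CARD('n)}. \<forall>j'\<in>{1..CARD('n)}. V j \<bullet> V j' = (if j = j' then 1 else 0)) \<and>
     (\<forall>j\<in>{1..CARD('n)}. \<forall>j'\<in>{1..CARD('n)}. U j \<bullet> U j' = (if j = j' then 1 else 0)) \<and>
     (\<forall>j\<in>{1..CARD('n)}. A *v V j = s j *\<^sub>R U j)"

definition singular_pair :: "real^'n^'m \<Rightarrow> nat \<Rightarrow> real \<Rightarrow> real^'n \<Rightarrow> bool" where
  "singular_pair A l \<sigma> v \<longleftrightarrow>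
     (\<exists>s U V. is_svd A s U V \<and> \<sigma> = s l \<and> v = V l)"

definition row_pmf :: "real^'n^'m \<Rightarrow> 'm pmf" where
  "row_pmf A = embed_pmf (\<lambda>i. (norm (A $ i))^2 / (frob_norm A)^2)"

text \<open>KGSM iterates (x_k, y_k), driven by the index sequence \<omega> (\<omega> k = i_k).\<close>
primrec kgsm :: "real^'n^'m \<Rightarrow> real^'m \<Rightarrow> real \<Rightarrow> real \<Rightarrow> real^'n \<Rightarrow> (nat \<Rightarrow> 'm) \<Rightarrow> nat \<Rightarrow> (real^'n) \<times> (real^'n)" where
  "kgsm A b M \<beta> x0 \<omega> 0 = (x0, 0)"
| "kgsm A b M \<beta> x0 \<omega> (Suc k) =
     (let xk = fst (kgsm A b M \<beta> x0 \<omega> k); yk = snd (kgsm A b M \<beta> x0 \<omega> k); i = \<omega> k;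
          x' = xk + ((b $ i - xk \<bullet> (A $ i)) / (norm (A $ i))^2) *\<^sub>R (A $ i) + M *\<^sub>R yk;
          y' = \<beta> *\<^sub>R yk + (1 - \<beta>) *\<^sub>R (x' - xk)
      in (x', y'))"

definition vec2 :: "real \<Rightarrow> real \<Rightarrow> real^2" where
  "vec2 a c = (\<chi> i. if i = 1 then a else c)"

definition mat22 :: "real \<Rightarrow> real \<Rightarrow> real \<Rightarrow> real \<Rightarrow> real^2^2" where
  "mat22 a c d e = (\<chi> i. if i = 1 then vec2 a c else vec2 d e)"

definition matpow2 :: "real^2^2 \<Rightarrow> nat \<Rightarrow> real^2^2" where
  "matpow2 T k = (((**) T) ^^ k) (mat 1)"

end

theory Submission
  imports Defs
begin

text \<open>
  Conditionally on the first \<open>k\<close> indices, the expected Kaczmarz projection scales the error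
  component along a right singular vector \<open>v\<close> by exactly \<open>1 - \<sigma>\<^sup>2 / \<parallel>A\<parallel>\<^sub>F\<^sup>2\<close>, since
  \<open>E[a\<^sub>i a\<^sub>i\<^sup>T / \<parallel>a\<^sub>i\<parallel>\<^sup>2] = A\<^sup>T A / \<parallel>A\<parallel>\<^sub>F\<^sup>2\<close> and \<open>A\<^sup>T A v = \<sigma>\<^sup>2 v\<close>. So \<open>e\<^sub>k = E\<langle>x\<^sub>k - x, v\<rangle>\<close> and
  \<open>f\<^sub>k = E\<langle>y\<^sub>k, v\<rangle>\<close> obey a linear recurrence, and the substitution
  \<open>w\<^sub>k = f\<^sub>k / (1 - \<beta>)\<^sup>2 - e\<^sub>k / (1 - \<beta>)\<close> turns it into \<open>(e\<^sub>k\<^sub>+\<^sub>1, w\<^sub>k\<^sub>+\<^sub>1) = T (e\<^sub>k, w\<^sub>k)\<close> with \<open>T\<close> the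
  \<open>2 \<times> 2\<close> matrix of the theorem.
\<close>

lemma span_orthonormal_family_eq_UNIV:
  fixes V :: "nat \<Rightarrow> 'a::euclidean_space"
  assumes orth: "\<forall>j\<in>{1..DIM('a)}. \<forall>j'\<in>{1..DIM('a)}. V j \<bullet> V j' = (if j = j' then 1 else 0)"
  shows "span (V ` {1..DIM('a)}) = UNIV"
proof -
  let ?I = "{1..DIM('a)}"
  have "inj_on V ?I"
  proof (rule inj_onI)
    fix j j' assume "j \<in> ?I" "j' \<in> ?I" "V j = V j'"
    then show "j = j'" using orth by (metis one_neq_zero)
  qed
  then have "card (V ` ?I) = dim (UNIV :: 'a set)"
    by (simp add: card_image dim_UNIV)
  moreover have "independent (V ` ?I)"
    by (rule pairwise_orthogonal_independent)
      (use orth in \<open>fastforce simp: pairwise_def orthogonal_def\<close>)+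
  ultimately show ?thesis
    using card_eq_dim[of "V ` ?I" UNIV] by auto
qed

lemma singular_pair_inner_image:
  fixes A :: "real^'n^'m"
  assumes "l \<in> {1..CARD('n)}" "singular_pair A l \<sigma> v"
  shows "(A *v w) \<bullet> (A *v v) = \<sigma>^2 * (w \<bullet> v)"
proof -
  obtain s U V where svd: "is_svd A s U V" and sv: "\<sigma> = s l" "v = V l"
    using assms(2) unfolding singular_pair_def by blast
  have orthV: "\<forall>j\<in>{1..CARD('n)}. \<forall>j'\<in>{1..CARD('n)}. V j \<bullet> V j' = (if j = j' then 1 else 0)"
    using svd unfolding is_svd_def by blast
  have "w \<in> span (V ` {1..CARD('n)})"
    using span_orthonormal_family_eq_UNIV[where 'a = "real^'n"] orthV by simp
  then show ?thesis
  proof (rule linear_eq_on_span[where f = "\<lambda>w. (A *v w) \<bullet> (A *v v)" and g = "\<lambda>w. \<sigma>^2 * (w \<bullet> v)", rotated 3])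
    show "linear (\<lambda>w. (A *v w) \<bullet> (A *v v))" "linear (\<lambda>w. \<sigma>^2 * (w \<bullet> v))"
      by (auto intro!: linearI simp: matrix_vector_right_distrib inner_add_left
          matrix_vector_mult_scaleR algebra_simps)
    fix z assume "z \<in> V ` {1..CARD('n)}"
    then obtain j where "j \<in> {1..CARD('n)}" "z = V j" by blast
    then show "(A *v z) \<bullet> (A *v v) = \<sigma>^2 * (z \<bullet> v)"
      using svd assms(1) sv unfolding is_svd_def by (auto simp: power2_eq_square)
  qed
qed

lemma frob_norm_sq: "(frob_norm A)^2 = (\<Sum>i\<in>UNIV. (norm (A $ i))^2)"
proof -
  have "(frob_norm A)^2 = (\<Sum>i\<in>UNIV. \<Sum>j\<in>UNIV. (A $ i $ j)^2)"
    unfolding frob_norm_def by (rule real_sqrt_pow2) (auto intro!: sum_nonneg)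
  also have "\<dots> = (\<Sum>i\<in>UNIV. (norm (A $ i))^2)"
    by (simp only: power2_norm_eq_inner) (simp add: inner_vec_def power2_eq_square)
  finally show ?thesis .
qed

lemma frob_norm_sq_pos:
  fixes A :: "real^'n^'m"
  assumes "\<forall>i. A $ i \<noteq> 0"
  shows "(frob_norm A)^2 > 0"
  unfolding frob_norm_sq using assms by (intro sum_pos) auto

lemma pmf_row_pmf:
  fixes A :: "real^'n^'m"
  assumes "\<forall>i. A $ i \<noteq> 0"
  shows "pmf (row_pmf A) i = (norm (A $ i))^2 / (frob_norm A)^2"
  unfolding row_pmf_def
proof (rule pmf_embed_pmf)
  have "(\<Sum>j\<in>UNIV. (norm (A $ j))^2 / (frob_norm A)^2) = 1"
    using frob_norm_sq_pos[OF assms] by (simp add: sum_divide_distrib[symmetric] frob_norm_sq[symmetric])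
  then show "(\<integral>\<^sup>+ j. ennreal ((norm (A $ j))^2 / (frob_norm A)^2) \<partial>count_space UNIV) = 1"
    by (simp add: nn_integral_count_space_finite sum_ennreal)
qed simp

lemma expectation_row_pmf_div_row_norm:
  fixes A :: "real^'n^'m"
  assumes "\<forall>i. A $ i \<noteq> 0"
  shows "measure_pmf.expectation (row_pmf A) (\<lambda>i. g i / (norm (A $ i))^2)
    = (\<Sum>i\<in>UNIV. g i) / (frob_norm A)^2"
proof -
  have "measure_pmf.expectation (row_pmf A) (\<lambda>i. g i / (norm (A $ i))^2)
      = (\<Sum>i\<in>UNIV. pmf (row_pmf A) i * (g i / (norm (A $ i))^2))"
    by (subst integral_measure_pmf[of UNIV]) auto
  also have "\<dots> = (\<Sum>i\<in>UNIV. g i / (frob_norm A)^2)"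
    using assms by (intro sum.cong) (auto simp: pmf_row_pmf)
  finally show ?thesis
    by (simp add: sum_divide_distrib)
qed

definition kaczmarz_step :: "real^'n^'m \<Rightarrow> real^'m \<Rightarrow> real^'n \<Rightarrow> 'm \<Rightarrow> real^'n" where
  "kaczmarz_step A b z i = z + ((b $ i - z \<bullet> A $ i) / (norm (A $ i))^2) *\<^sub>R A $ i"

lemma expectation_kaczmarz_step_inner_singular:
  fixes A :: "real^'n^'m"
  assumes rows: "\<forall>i. A $ i \<noteq> 0"
    and "l \<in> {1..CARD('n)}" "singular_pair A l \<sigma> v"
  shows "measure_pmf.expectation (row_pmf A) (\<lambda>i. (kaczmarz_step A (A *v x) z i - x) \<bullet> v)
    = (1 - \<sigma>^2 / (frob_norm A)^2) * ((z - x) \<bullet> v)"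
proof -
  have row: "(A *v w) $ i = A $ i \<bullet> w" for w i
    by (simp add: matrix_vector_mult_def inner_vec_def mult.commute)
  have step: "(kaczmarz_step A (A *v x) z i - x) \<bullet> v
      = (z - x) \<bullet> v - (A *v (z - x)) $ i * (A *v v) $ i / (norm (A $ i))^2" for i
    by (simp add: kaczmarz_step_def row inner_diff_left inner_diff_right inner_commute algebra_simps
        add_divide_distrib diff_divide_distrib)
  have "measure_pmf.expectation (row_pmf A) (\<lambda>i. (kaczmarz_step A (A *v x) z i - x) \<bullet> v)
      = (z - x) \<bullet> v - measure_pmf.expectation (row_pmf A)
          (\<lambda>i. (A *v (z - x)) $ i * (A *v v) $ i / (norm (A $ i))^2)"
    unfolding step by (simp add: integrable_measure_pmf_finite)
  also have "\<dots> = (z - x) \<bullet> v - ((A *v (z - x)) \<bullet> (A *v v)) / (frob_norm A)^2"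
    by (simp add: expectation_row_pmf_div_row_norm[OF rows] inner_vec_def)
  also have "\<dots> = (1 - \<sigma>^2 / (frob_norm A)^2) * ((z - x) \<bullet> v)"
    by (simp add: singular_pair_inner_image[OF assms(2,3)] algebra_simps)
  finally show ?thesis .
qed

lemma finite_set_Pi_pmf:
  assumes "finite A" "\<And>i. finite (set_pmf (p i))"
  shows "finite (set_pmf (Pi_pmf A d p))"
  using assms by (auto simp: set_Pi_pmf)

lemma expectation_pair_pmf_finite:
  fixes f :: "'a \<times> 'b \<Rightarrow> real"
  assumes p: "finite (set_pmf p)" and q: "finite (set_pmf q)"
  shows "measure_pmf.expectation (pair_pmf p q) f
       = measure_pmf.expectation q (\<lambda>b. measure_pmf.expectation p (\<lambda>a. f (a, b)))"
proof -
  have "measure_pmf.expectation (pair_pmf p q) f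
      = (\<Sum>(a, b)\<in>set_pmf p \<times> set_pmf q. pmf p a * pmf q b * f (a, b))"
    by (subst integral_measure_pmf[of "set_pmf p \<times> set_pmf q"])
      (use p q in \<open>auto intro!: sum.cong simp: pmf_pair\<close>)
  also have "\<dots> = (\<Sum>b\<in>set_pmf q. pmf q b * (\<Sum>a\<in>set_pmf p. pmf p a * f (a, b)))"
    by (subst sum.cartesian_product[symmetric], subst sum.swap)
      (simp add: sum_distrib_left algebra_simps)
  also have "\<dots> = measure_pmf.expectation q (\<lambda>b. measure_pmf.expectation p (\<lambda>a. f (a, b)))"
    using p q by (simp add: integral_measure_pmf[of "set_pmf p"] integral_measure_pmf[of "set_pmf q"])
  finally show ?thesis .
qed

lemma expectation_Pi_pmf_lessThan_Suc:
  fixes g :: "(nat \<Rightarrow> 'a) \<Rightarrow> real"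
  assumes fin: "\<And>i. finite (set_pmf (p i))"
  shows "measure_pmf.expectation (Pi_pmf {..<Suc j} d p) g
       = measure_pmf.expectation (Pi_pmf {..<j} d p)
           (\<lambda>f. measure_pmf.expectation (p j) (\<lambda>y. g (f(j := y))))"
proof -
  have "Pi_pmf {..<Suc j} d p = map_pmf (\<lambda>(y, f). f(j := y)) (pair_pmf (p j) (Pi_pmf {..<j} d p))"
    using Pi_pmf_insert[of "{..<j}" j d p] by (simp add: lessThan_Suc)
  then show ?thesis
    by (simp add: expectation_pair_pmf_finite fin finite_set_Pi_pmf case_prod_unfold)
qed

lemma kgsm_Suc_fst:
  "fst (kgsm A b M \<beta> x0 \<omega> (Suc k))
     = kaczmarz_step A b (fst (kgsm A b M \<beta> x0 \<omega> k)) (\<omega> k) + M *\<^sub>R snd (kgsm A b M \<beta> x0 \<omega> k)"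
  by (simp add: kaczmarz_step_def Let_def)

lemma kgsm_Suc_snd:
  "snd (kgsm A b M \<beta> x0 \<omega> (Suc k))
     = \<beta> *\<^sub>R snd (kgsm A b M \<beta> x0 \<omega> k)
       + (1 - \<beta>) *\<^sub>R (fst (kgsm A b M \<beta> x0 \<omega> (Suc k)) - fst (kgsm A b M \<beta> x0 \<omega> k))"
  by (simp add: Let_def)

lemma kgsm_prefix_cong:
  "(\<And>i. i < k \<Longrightarrow> \<omega> i = \<omega>' i) \<Longrightarrow> kgsm A b M \<beta> x0 \<omega> k = kgsm A b M \<beta> x0 \<omega>' k"
  by (induction k) (auto simp: Let_def)

lemma expectation_Pi_pmf_kgsm:
  fixes g :: "(real^'n) \<times> (real^'n) \<Rightarrow> 'm::finite \<Rightarrow> real"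
  assumes "finite (set_pmf p)"
  shows "measure_pmf.expectation (Pi_pmf {..<Suc k} d (\<lambda>_. p))
            (\<lambda>\<omega>. g (kgsm A b M \<beta> x0 \<omega> k) (\<omega> k))
       = measure_pmf.expectation (Pi_pmf {..<k} d (\<lambda>_. p))
            (\<lambda>\<omega>. measure_pmf.expectation p (g (kgsm A b M \<beta> x0 \<omega> k)))"
proof -
  have "kgsm A b M \<beta> x0 (f(k := i)) k = kgsm A b M \<beta> x0 f k" for f i
    by (rule kgsm_prefix_cong) simp
  then show ?thesis
    by (simp add: expectation_Pi_pmf_lessThan_Suc assms)
qed

lemma integrable_Pi_pmf_finite:
  fixes p :: "'a::finite pmf" and h :: "(nat \<Rightarrow> 'a) \<Rightarrow> real"
  shows "integrable (measure_pmf (Pi_pmf {..<k} d (\<lambda>_. p))) h"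
  by (intro integrable_measure_pmf_finite finite_set_Pi_pmf) simp_all

lemma expectation_kgsm_error_Suc:
  fixes A :: "real^'n^'m" and x x0 v :: "real^'n" and \<beta> M \<sigma> :: real and d :: 'm
  assumes "\<forall>i. A $ i \<noteq> 0" "l \<in> {1..CARD('n)}" "singular_pair A l \<sigma> v"
  defines "P \<equiv> \<lambda>k. Pi_pmf {..<k} d (\<lambda>_. row_pmf A)"
  defines "e \<equiv> \<lambda>k. measure_pmf.expectation (P k) (\<lambda>\<omega>. (fst (kgsm A (A *v x) M \<beta> x0 \<omega> k) - x) \<bullet> v)"
    and "f \<equiv> \<lambda>k. measure_pmf.expectation (P k) (\<lambda>\<omega>. snd (kgsm A (A *v x) M \<beta> x0 \<omega> k) \<bullet> v)"
  shows "e (Suc k) = (1 - \<sigma>^2 / (frob_norm A)^2) * e k + M * f k"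
proof -
  let ?S = "\<lambda>\<omega>. kgsm A (A *v x) M \<beta> x0 \<omega> k"
  let ?c = "1 - \<sigma>^2 / (frob_norm A)^2"
  define g where "g s i = (kaczmarz_step A (A *v x) (fst s) i + M *\<^sub>R snd s - x) \<bullet> v" for s i
  have "g s = (\<lambda>i. (kaczmarz_step A (A *v x) (fst s) i - x) \<bullet> v + M * (snd s \<bullet> v))" for s
    by (simp add: g_def inner_add_left inner_diff_left fun_eq_iff)
  then have row_expectation:
    "measure_pmf.expectation (row_pmf A) (g s) = ?c * ((fst s - x) \<bullet> v) + M * (snd s \<bullet> v)" for s
    by (simp add: expectation_kaczmarz_step_inner_singular[OF assms(1-3)] integrable_measure_pmf_finite)
  have "e (Suc k) = measure_pmf.expectation (P (Suc k)) (\<lambda>\<omega>. g (?S \<omega>) (\<omega> k))"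
    by (simp only: e_def g_def kgsm_Suc_fst)
  also have "\<dots> = measure_pmf.expectation (P k) (\<lambda>\<omega>. measure_pmf.expectation (row_pmf A) (g (?S \<omega>)))"
    unfolding P_def by (rule expectation_Pi_pmf_kgsm) simp
  also have "\<dots> = measure_pmf.expectation (P k)
      (\<lambda>\<omega>. ?c * ((fst (?S \<omega>) - x) \<bullet> v) + M * (snd (?S \<omega>) \<bullet> v))"
    by (simp only: row_expectation)
  also have "\<dots> = ?c * e k + M * f k"
    unfolding e_def f_def P_def by (simp add: integrable_Pi_pmf_finite del: kgsm.simps(2))
  finally show ?thesis .
qed

lemma expectation_kgsm_momentum_Suc:
  fixes A :: "real^'n^'m::finite" and b :: "real^'m" and p :: "'m pmf" and d :: 'm
    and x x0 v :: "real^'n" and \<beta> M :: real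
  defines "P \<equiv> \<lambda>k. Pi_pmf {..<k} d (\<lambda>_. p)"
  defines "e \<equiv> \<lambda>k. measure_pmf.expectation (P k) (\<lambda>\<omega>. (fst (kgsm A b M \<beta> x0 \<omega> k) - x) \<bullet> v)"
    and "f \<equiv> \<lambda>k. measure_pmf.expectation (P k) (\<lambda>\<omega>. snd (kgsm A b M \<beta> x0 \<omega> k) \<bullet> v)"
  shows "f (Suc k) = \<beta> * f k + (1 - \<beta>) * (e (Suc k) - e k)"
proof -
  let ?S = "\<lambda>\<omega>. kgsm A b M \<beta> x0 \<omega> k"
  have lift: "measure_pmf.expectation (P (Suc k)) (\<lambda>\<omega>. h (?S \<omega>))
      = measure_pmf.expectation (P k) (\<lambda>\<omega>. h (?S \<omega>))" for h :: "_ \<Rightarrow> real"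
    using expectation_Pi_pmf_kgsm[where g = "\<lambda>s i. h s" and p = p] by (simp add: P_def)
  have momentum: "(\<beta> *\<^sub>R y + (1 - \<beta>) *\<^sub>R (z' - z)) \<bullet> v
      = \<beta> * (y \<bullet> v) + (1 - \<beta>) * ((z' - x) \<bullet> v) - (1 - \<beta>) * ((z - x) \<bullet> v)" for y z z' :: "real^'n"
    by (simp add: inner_add_left inner_diff_left algebra_simps)
  have "f (Suc k) = \<beta> * measure_pmf.expectation (P (Suc k)) (\<lambda>\<omega>. snd (?S \<omega>) \<bullet> v)
      + (1 - \<beta>) * e (Suc k) - (1 - \<beta>) * measure_pmf.expectation (P (Suc k)) (\<lambda>\<omega>. (fst (?S \<omega>) - x) \<bullet> v)"
    unfolding f_def e_def P_def kgsm_Suc_snd[where k = k] momentum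
    by (simp add: integrable_Pi_pmf_finite del: kgsm.simps(2))
  also have "\<dots> = \<beta> * f k + (1 - \<beta>) * e (Suc k) - (1 - \<beta>) * e k"
    by (simp only: lift[of "\<lambda>s. snd s \<bullet> v"] lift[of "\<lambda>s. (fst s - x) \<bullet> v"] e_def f_def)
  finally show ?thesis
    by (simp add: algebra_simps)
qed

lemma vec2_nth [simp]: "vec2 a c $ 1 = a" "vec2 a c $ 2 = c"
  by (simp_all add: vec2_def)

lemma vec2_inner: "vec2 a c \<bullet> w = a * w $ 1 + c * w $ 2"
  by (simp add: inner_vec_def sum_2)

lemma mat22_mult_vec2: "mat22 a c d e *v vec2 s t = vec2 (a * s + c * t) (d * s + e * t)"
  by (simp add: vec_eq_iff forall_2 mat22_def matrix_vector_mult_def sum_2 vec2_def)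

lemma matpow2_0: "matpow2 T 0 *v w = w"
  by (simp add: matpow2_def)

lemma matpow2_Suc: "matpow2 T (Suc k) *v w = T *v (matpow2 T k *v w)"
  by (simp add: matpow2_def matrix_vector_mul_assoc)

lemma momentum_recurrence_closed_form:
  fixes e f :: "nat \<Rightarrow> real"
  assumes "\<beta> \<noteq> 1" "f 0 = 0"
    and e_Suc: "\<And>k. e (Suc k) = c * e k + M * f k"
    and f_Suc: "\<And>k. f (Suc k) = \<beta> * f k + (1 - \<beta>) * (e (Suc k) - e k)"
  shows "e (Suc k) = vec2 (c + M * (1 - \<beta>)) (M * (1 - \<beta>)^2) \<bullet>
           (matpow2 (mat22 (c + M * (1 - \<beta>)) (M * (1 - \<beta>)^2) (-1) \<beta>) k *v vec2 1 (-1 / (1 - \<beta>)))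
           * e 0"
proof -
  have nz: "1 - \<beta> \<noteq> 0"
    using assms(1) by simp
  define r where "r = c + M * (1 - \<beta>)"
  define \<zeta> where "\<zeta> = M * (1 - \<beta>)^2"
  define T where "T = mat22 r \<zeta> (-1) \<beta>"
  define w where "w k = f k / (1 - \<beta>)^2 - e k / (1 - \<beta>)" for k
  have f_eq: "f k = (1 - \<beta>)^2 * w k + (1 - \<beta>) * e k" for k
  proof -
    have "(1 - \<beta>)^2 * (f k / (1 - \<beta>)^2) = f k" "(1 - \<beta>)^2 * (e k / (1 - \<beta>)) = (1 - \<beta>) * e k"
      using nz by (simp_all add: power2_eq_square)
    then show ?thesis
      by (simp add: w_def right_diff_distrib)
  qed
  have e_Suc': "e (Suc k) = r * e k + \<zeta> * w k" for k
    unfolding e_Suc f_eq r_def \<zeta>_def by (simp add: algebra_simps)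
  have w_Suc: "w (Suc k) = - e k + \<beta> * w k" for k
  proof -
    have "(1 - \<beta>)^2 * w (Suc k) = (1 - \<beta>)^2 * (- e k + \<beta> * w k)"
      using f_Suc[of k] f_eq[of k] f_eq[of "Suc k"] by algebra
    then show ?thesis
      using nz by simp
  qed
  have invariant: "vec2 (e k) (w k) = e 0 *\<^sub>R (matpow2 T k *v vec2 1 (-1 / (1 - \<beta>)))" for k
  proof (induction k)
    case 0
    show ?case using nz assms(2) by (simp add: matpow2_0 w_def vec_eq_iff forall_2)
  next
    case (Suc k)
    have "e 0 *\<^sub>R (matpow2 T (Suc k) *v vec2 1 (-1 / (1 - \<beta>))) = T *v vec2 (e k) (w k)"
      by (simp add: matpow2_Suc matrix_vector_mult_scaleR Suc.IH)
    also have "\<dots> = vec2 (e (Suc k)) (w (Suc k))"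
      by (simp add: T_def mat22_mult_vec2 e_Suc' w_Suc)
    finally show ?case ..
  qed
  have "e (Suc k) = vec2 r \<zeta> \<bullet> vec2 (e k) (w k)"
    by (simp add: e_Suc' vec2_inner)
  also have "\<dots> = vec2 r \<zeta> \<bullet> (matpow2 T k *v vec2 1 (-1 / (1 - \<beta>))) * e 0"
    by (simp add: invariant)
  finally show ?thesis
    unfolding r_def \<zeta>_def T_def .
qed

theorem theorem1p1:
  fixes A :: "real^'n^'m" and x x0 v :: "real^'n" and \<beta> M \<sigma> :: real and l :: nat
  assumes "CARD('m) \<ge> CARD('n)"
    and "\<forall>i. A $ i \<noteq> 0"
    and "0 \<le> \<beta>" "\<beta> < 1" "0 \<le> M" "M \<le> 1"
    and "l \<in> {1..CARD('n)}"
    and "singular_pair A l \<sigma> v"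
  shows "\<forall>k. measure_pmf.expectation (Pi_pmf {..k} undefined (\<lambda>_. row_pmf A))
            (\<lambda>\<omega>. (fst (kgsm A (A *v x) M \<beta> x0 \<omega> (Suc k)) - x) \<bullet> v)
        = vec2 (1 - \<sigma>^2 / (frob_norm A)^2 + M * (1 - \<beta>)) (M * (1 - \<beta>)^2) \<bullet>
          (matpow2 (mat22 (1 - \<sigma>^2 / (frob_norm A)^2 + M * (1 - \<beta>)) (M * (1 - \<beta>)^2) (-1) \<beta>) k
            *v vec2 1 (-1 / (1 - \<beta>))) * ((x0 - x) \<bullet> v)"
proof -
  define P where "P j = Pi_pmf {..<j} undefined (\<lambda>_. row_pmf A)" for j :: nat
  define e where "e j = measure_pmf.expectation (P j) (\<lambda>\<omega>. (fst (kgsm A (A *v x) M \<beta> x0 \<omega> j) - x) \<bullet> v)" for j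
  define f where "f j = measure_pmf.expectation (P j) (\<lambda>\<omega>. snd (kgsm A (A *v x) M \<beta> x0 \<omega> j) \<bullet> v)" for j
  have \<beta>: "\<beta> \<noteq> 1" and f_0: "f 0 = 0"
    using assms(4) by (simp_all add: f_def P_def)
  have e_Suc: "e (Suc j) = (1 - \<sigma>^2 / (frob_norm A)^2) * e j + M * f j" for j
    unfolding e_def f_def P_def by (rule expectation_kgsm_error_Suc[OF assms(2,7,8)])
  have f_Suc: "f (Suc j) = \<beta> * f j + (1 - \<beta>) * (e (Suc j) - e j)" for j
    unfolding e_def f_def P_def by (rule expectation_kgsm_momentum_Suc)
  have e_0: "e 0 = (x0 - x) \<bullet> v"
    by (simp add: e_def P_def)
  show ?thesis
    using momentum_recurrence_closed_form[OF \<beta> f_0 e_Suc f_Suc] unfolding e_0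
    unfolding e_def P_def lessThan_Suc_atMost by blast
qed

end
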